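(* Let $d\ge2$ be an integer, $D_1,\dots,D_d$ real constants, $D=\sum_iD_i$. Define $m:[-D^2/d,\pi^2/d)\to[0,\infty)$ as follows (with $\mu=-\lambda$ when $\lambda<0$): $$m(\lambda)=\begin{cases}0 & \text{if } \lambda=-D^2/d<0,\\[2pt] \left|\ln\left(\dfrac{\big(\frac{e^{\sqrt{d\mu}}}{\sqrt{-C_-}}+1\big)\big(-\frac{1}{\sqrt{-C_-}}+1\big)}{\big(1-\frac{e^{\sqrt{d\mu}}}{\sqrt{-C_-}}\big)\big(1+\frac{1}{\sqrt{-C_-}}\big)}\right)\right| & \text{if } -D^2/d<\lambda<0,\\[2pt] |D| & \text{if } \lambda=0,\\[2pt] \left|\ln\dfrac{\tan(C_++\sqrt{d\lambda})+\sec(C_++\sqrt{d\lambda})}{\tan(C_+)+\sec(C_+)}\right| & \text{if } 0<\lambda<\pi^2/d,\end{cases}$$ where $C_-=\dfrac{e^{2\sqrt{d\mu}}-e^{D+\sqrt{d\mu}}}{e^{D+\sqrt{d\mu}}-1}$ and $C_+=\arctan\left(\dfrac{\cos(\sqrt{d\lambda})-e^D}{\sin(\sqrt{d\lambda})}\right)$. For $\lambda\in[-D^2/d,\pi^2/d)$, let $L=(L_1,\dots,L_d)\in C^1([0,1];\mathbb{R}^d)$ be the unique solution of $$L_i'=-\Big(\sum_{k=1}^dL_k\Big)L_i-\lambda\ \text{ on }[0,1],\qquad\int_0^1L_i(r)\,dr=D_i\qquad(i=1,\dots,d).$$ Then $L$ satisfies $$(d-1)\lambda=\sum_{i=1}^dL_i(0)^2-\Big(\sum_{i=1}^dL_i(0)\Big)^2$$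 if and only if $$m(\lambda)=\sqrt{\frac{d}{d-1}\sum_{i=1}^d\Big(D_i-\frac{D}{d}\Big)^2}.$$
   Context: For $-D^2/d<\lambda<0$ one has $C_-<0$, so $\sqrt{-C_-}$ is defined. *)

theory Defs
  imports "HOL-Analysis.Analysis"
begin

definition mfun :: "nat \<Rightarrow> real \<Rightarrow> real \<Rightarrow> real" where
  "mfun d D lam =
    (if lam = - (D^2) / real d \<and> lam < 0 then 0
     else if lam < 0 then
       (let mu = - lam; s = sqrt (real d * mu);
            Cm = (exp (2 * s) - exp (D + s)) / (exp (D + s) - 1);
            r = sqrt (- Cm)
        in \<bar>ln (((exp s / r + 1) * (- 1 / r + 1)) / ((1 - exp s / r) * (1 + 1 / r)))\<bar>)
     else if lam = 0 then \<bar>D\<bar>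
     else
       (let s = sqrt (real d * lam);
            Cp = arctan ((cos s - exp D) / sin s)
        in \<bar>ln ((tan (Cp + s) + 1 / cos (Cp + s)) / (tan Cp + 1 / cos Cp))\<bar>))"

end

theory Submission
  imports Defs
begin

text \<open>
  With S = L_1 + ... + L_d the system yields the Riccati equation S' = -S^2 - d lam, which is
  linearised by E t = exp (integral of S over [0,t]): E'' = -d lam E, E 0 = 1, E' 0 = S 0 and
  E 1 = exp D. Each deviation L_i - S/d is a constant u_i times 1/E, so with J the integral of
  1/E over [0,1] we get D_i - D/d = u_i J, while the sum of the L_i 0 squared minus the square of
  their sum is (sum of u_i squared) - (d - 1)/d (S 0)^2. Both sides of the equivalence therefore
  say that the sum of the u_i squared equals (d - 1)/d ((S 0)^2 + d lam), as soon as
  m(lam) = sqrt ((S 0)^2 + d lam) J. This identity is the heart of the matter: according to the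
  sign of lam, E is a trigonometric, affine or hyperbolic function, and the formula for m is the
  closed form of sqrt ((S 0)^2 + d lam) times the integral of 1/E.
\<close>

lemma DERIV_zero_imp_eq_at_0:
  assumes "\<And>t. t \<in> {0..1} \<Longrightarrow> (f has_real_derivative 0) (at t within {0..1})"
    and "t \<in> {0..1::real}"
  shows "f t = f 0"
  using has_field_derivative_zero_constant[of "{0..1::real}" f] assms by fastforce

lemma integral_unit_interval_eq_diff:
  assumes "\<And>t. t \<in> {0..1} \<Longrightarrow> (H has_real_derivative g t) (at t within {0..1::real})"
  shows "integral {0..1} g = H 1 - H 0"
  using fundamental_theorem_of_calculus[of 0 1 H g] assms
  by (auto simp: has_real_derivative_iff_has_vector_derivative intro: integral_unique)

lemma tan_plus_sec_eq: "cos (x::real) \<noteq> 0 \<Longrightarrow> tan x + 1 / cos x = (1 + sin x) / cos x"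
  by (simp add: tan_def add_divide_distrib)

lemma one_plus_sin_pos:
  assumes "cos (x::real) > 0"
  shows "1 + sin x > 0"
proof -
  have "sin x \<noteq> -1"
  proof
    assume "sin x = -1"
    then have "(cos x)\<^sup>2 = 0" using sin_cos_squared_add[of x] by simp
    then show False using assms by simp
  qed
  then show ?thesis
    using sin_ge_minus_one[of x] by linarith
qed

lemma tan_plus_sec_pos:
  assumes "cos (x::real) > 0"
  shows "tan x + 1 / cos x > 0"
proof -
  have "tan x + 1 / cos x = (1 + sin x) / cos x"
    by (intro tan_plus_sec_eq) (use assms in simp)
  then show ?thesis using assms one_plus_sin_pos[OF assms] by simp
qed

definition inv_gd :: "real \<Rightarrow> real" where
  "inv_gd x = ln (tan x + 1 / cos x)"

lemma DERIV_inv_gd: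
  assumes c: "cos (x::real) > 0"
  shows "(inv_gd has_real_derivative 1 / cos x) (at x)"
proof -
  have "0 < cos x * cos x * (1 + sin x)"
    using c one_plus_sin_pos[OF c] by simp
  then have "cos x * cos x + cos x * (cos x * sin x) \<noteq> 0"
    by (simp add: algebra_simps)
  then show ?thesis
    unfolding inv_gd_def using c tan_plus_sec_pos[OF c]
    by (auto intro!: derivative_eq_intros simp: tan_def field_simps power2_eq_square)
qed

lemma DERIV_ln_exp_affine:
  assumes "0 < (exp (k * t) + a) / b"
  shows "((\<lambda>t. ln ((exp (k * t) + a) / b)) has_real_derivative k * exp (k * t) / (exp (k * t) + a))
    (at t within S)"
proof -
  have "b \<noteq> 0" "exp (k * t) + a \<noteq> 0" using assms by auto
  moreover have "((\<lambda>t. ln ((exp (k * t) + a) / b)) has_real_derivative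
      1 / ((exp (k * t) + a) / b) * (exp (k * t) * k / b)) (at t within S)"
    using assms by (auto intro!: derivative_eq_intros)
  moreover have "1 / (x / b) * (y / b) = y / x" if "b \<noteq> 0" for x y :: real
    using that by (simp add: field_simps)
  ultimately show ?thesis
    by (simp add: mult.commute)
qed

lemma sgn_exp_diff: "sgn (exp (a::real) - exp b) = sgn (a - b)"
  by (cases rule: linorder_cases[of a b]) (auto simp: sgn_if)

locale riccati_linearization =
  fixes c s0 D :: real and E q :: "real \<Rightarrow> real"
  assumes E_deriv: "\<And>t. t \<in> {0..1} \<Longrightarrow> (E has_real_derivative q t) (at t within {0..1})"
    and q_deriv: "\<And>t. t \<in> {0..1} \<Longrightarrow> (q has_real_derivative - c * E t) (at t within {0..1})"
    and E_0: "E 0 = 1" and q_0: "q 0 = s0" and E_1: "E 1 = exp D"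
    and E_pos: "\<And>t. t \<in> {0..1} \<Longrightarrow> 0 < E t"
begin

definition J :: real where
  "J = integral {0..1} (\<lambda>t. 1 / E t)"

lemma continuous_on_inverse_E: "continuous_on {0..1} (\<lambda>t. 1 / E t)"
proof -
  have "continuous_on {0..1} E"
    by (rule DERIV_continuous_on) (rule E_deriv)
  then show ?thesis
    using E_pos by (intro continuous_intros) (auto simp: less_imp_neq[symmetric])
qed

lemma J_pos: "0 < J"
proof -
  obtain x where x: "x \<in> {0..1::real}" and min: "\<forall>y\<in>{0..1}. 1 / E x \<le> 1 / E y"
    using continuous_attains_inf[OF compact_Icc _ continuous_on_inverse_E] by auto
  have "((\<lambda>t. 1 / E x) has_integral (1 / E x)) {0..1::real}"
    using has_integral_const_real[of "1 / E x" 0 1] by simp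
  moreover have "((\<lambda>t. 1 / E t) has_integral J) {0..1}"
    unfolding J_def by (intro integrable_integral integrable_continuous_real continuous_on_inverse_E)
  ultimately have "1 / E x \<le> J"
    by (rule has_integral_le) (use min in simp)
  moreover have "0 < 1 / E x"
    using E_pos[OF x] by simp
  ultimately show ?thesis by linarith
qed

lemma integral_const_div_E: "integral {0..1} (\<lambda>t. u / E t) = u * J"
  using integral_mult[OF integrable_continuous_real[OF continuous_on_inverse_E], of u]
  by (simp add: J_def)

lemma integral_const_div_E_plus:
  assumes "\<And>t. t \<in> {0..1} \<Longrightarrow> f t = u / E t + g t" and "g integrable_on {0..1}"
  shows "integral {0..1} f = u * J + integral {0..1} g"
proof -
  have "integral {0..1} f = integral {0..1} (\<lambda>t. u * (1 / E t) + g t)"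
    using assms(1) by (intro integral_cong) simp
  also have "\<dots> = integral {0..1} (\<lambda>t. u * (1 / E t)) + integral {0..1} g"
    by (intro integral_add assms(2) integrable_continuous_real continuous_intros continuous_on_inverse_E)
  also have "\<dots> = u * J + integral {0..1} g"
    using integral_const_div_E[of u] by simp
  finally show ?thesis .
qed

lemma mfun_zero_branch:
  assumes "c = 0"
  shows "\<bar>D\<bar> = sqrt (s0\<^sup>2 + c) * J"
proof -
  have q_const: "q t = s0" if t: "t \<in> {0..1}" for t
    using DERIV_zero_imp_eq_at_0[of q t] q_deriv assms t q_0 by simp
  have E_lin: "E t = 1 + s0 * t" if t: "t \<in> {0..1}" for t
  proof -
    have "E t - s0 * t = E 0 - s0 * 0"
      by (rule DERIV_zero_imp_eq_at_0[OF _ t])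
        (use E_deriv q_const in \<open>auto intro!: derivative_eq_intros\<close>)
    then show ?thesis using E_0 by simp
  qed
  have "((\<lambda>t. ln (1 + s0 * t)) has_real_derivative s0 * (1 / E t)) (at t within {0..1})"
    if t: "t \<in> {0..1}" for t
    using E_pos[OF t] E_lin[OF t] by (auto intro!: derivative_eq_intros)
  from integral_unit_interval_eq_diff[OF this]
  have "s0 * J = D"
    using E_1 E_lin[of 1] integral_const_div_E[of s0] by simp
  from this[symmetric] show ?thesis
    using assms J_pos by (simp add: abs_mult)
qed

lemma E_eq_cos_sin:
  assumes "0 < c" and t: "t \<in> {0..1}"
  shows "E t = cos (sqrt c * t) + s0 / sqrt c * sin (sqrt c * t)"
proof -
  define k where "k = sqrt c"
  have k: "k > 0" "k\<^sup>2 = c" using assms by (auto simp: k_def)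
  have deriv_zero: "((\<lambda>t. k * E t * cos (k * t) - q t * sin (k * t)) has_real_derivative 0) (at x within {0..1})"
    "((\<lambda>t. q t * cos (k * t) + k * E t * sin (k * t)) has_real_derivative 0) (at x within {0..1})"
    if x: "x \<in> {0..1}" for x
    using E_deriv[OF x] q_deriv[OF x]
    by (auto intro!: derivative_eq_intros simp: k(2)[symmetric] algebra_simps power2_eq_square)
  have first: "k * E t * cos (k * t) - q t * sin (k * t) = k"
    using DERIV_zero_imp_eq_at_0[OF deriv_zero(1) t] E_0 by simp
  have second: "q t * cos (k * t) + k * E t * sin (k * t) = s0"
    using DERIV_zero_imp_eq_at_0[OF deriv_zero(2) t] q_0 by simp
  have ring_identity: "x * (a\<^sup>2 + b\<^sup>2) = (x * b - y * a) * b + (y * b + x * a) * a" for x y a b :: real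
    by (simp add: algebra_simps power2_eq_square)
  have "k * E t = k * E t * ((sin (k * t))\<^sup>2 + (cos (k * t))\<^sup>2)"
    by simp
  also have "\<dots> = (k * E t * cos (k * t) - q t * sin (k * t)) * cos (k * t)
      + (q t * cos (k * t) + k * E t * sin (k * t)) * sin (k * t)"
    by (rule ring_identity)
  also have "\<dots> = k * cos (k * t) + s0 * sin (k * t)"
    unfolding first second by simp
  finally have "k * E t = k * cos (k * t) + s0 * sin (k * t)" .
  then show ?thesis
    using k unfolding k_def[symmetric] by (simp add: field_simps)
qed

context
  fixes k \<theta> :: real
  assumes c_pos: "0 < c" and c_less: "c < pi\<^sup>2"
  defines k_def: "k \<equiv> sqrt c" and \<theta>_def: "\<theta> \<equiv> arctan (s0 / k)"
begin

lemma pos_branch_params: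
  shows sqrt_c_pos: "0 < k" and sqrt_c_sq: "k\<^sup>2 = c" and sin_sqrt_c_pos: "0 < sin k"
    and cos_\<theta>_pos: "0 < cos \<theta>" and s0_eq: "s0 = k * sin \<theta> / cos \<theta>"
proof -
  show k: "0 < k" "k\<^sup>2 = c" using c_pos by (auto simp: k_def)
  have "k < pi"
    using c_less real_sqrt_less_iff[of c "pi\<^sup>2"] by (simp add: k_def)
  then show "0 < sin k" using k(1) by (intro sin_gt_zero)
  show "0 < cos \<theta>"
    unfolding \<theta>_def by (intro cos_gt_zero_pi arctan_lbound arctan_ubound)
  then show "s0 = k * sin \<theta> / cos \<theta>"
    using tan_arctan[of "s0 / k"] k(1) by (simp add: \<theta>_def tan_def field_simps)
qed

lemma E_eq_cos_shift: "t \<in> {0..1} \<Longrightarrow> E t = cos (k * t - \<theta>) / cos \<theta>"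
  using E_eq_cos_sin[OF c_pos] cos_\<theta>_pos sqrt_c_pos unfolding k_def[symmetric] s0_eq
  by (simp add: cos_diff field_simps)

lemma cos_shift_pos: "t \<in> {0..1} \<Longrightarrow> 0 < cos (k * t - \<theta>)"
  using E_pos E_eq_cos_shift cos_\<theta>_pos by (fastforce simp: zero_less_divide_iff)

lemma Cp_eq: "arctan ((cos k - exp D) / sin k) = - \<theta>"
proof -
  have "exp D = cos k + s0 / k * sin k"
    using E_eq_cos_sin[OF c_pos, of 1] E_1 by (simp add: k_def)
  then have "(cos k - exp D) / sin k = - (s0 / k)"
    using sin_sqrt_c_pos by (simp add: field_simps)
  then show ?thesis by (simp add: \<theta>_def arctan_minus)
qed

lemma sqrt_s0_sq_plus_c_eq: "sqrt (s0\<^sup>2 + c) = k / cos \<theta>"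
proof -
  have sum_sq: "(k * a / b)\<^sup>2 + k\<^sup>2 = k\<^sup>2 * (a\<^sup>2 + b\<^sup>2) / b\<^sup>2" if "b \<noteq> 0" for a b :: real
    using that by (simp add: field_simps power2_eq_square)
  have "s0\<^sup>2 + c = (k / cos \<theta>)\<^sup>2"
    unfolding s0_eq sqrt_c_sq[symmetric] sum_sq[of "cos \<theta>" "sin \<theta>", OF less_imp_neq[OF cos_\<theta>_pos, symmetric]]
    by (simp add: power_divide)
  then show ?thesis using sqrt_c_pos cos_\<theta>_pos by simp
qed

lemma inv_gd_diff_eq: "inv_gd (- \<theta> + k) - inv_gd (- \<theta>) = k / cos \<theta> * J"
proof -
  have "((\<lambda>t. inv_gd (k * t - \<theta>)) has_real_derivative (k / cos \<theta>) / E t) (at t within {0..1})"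
    if t: "t \<in> {0..1}" for t
  proof -
    have "((\<lambda>t. inv_gd (k * t - \<theta>)) has_real_derivative 1 / cos (k * t - \<theta>) * k) (at t)"
      by (rule DERIV_chain2[where g = "\<lambda>t. k * t - \<theta>", OF DERIV_inv_gd[OF cos_shift_pos[OF t]]])
        (auto intro!: derivative_eq_intros)
    then show ?thesis
      using E_eq_cos_shift[OF t] cos_\<theta>_pos by (simp add: has_field_derivative_at_within)
  qed
  from integral_unit_interval_eq_diff[OF this]
  show ?thesis using integral_const_div_E[of "k / cos \<theta>"] by simp
qed

end

lemma mfun_pos_branch:
  assumes c_pos: "0 < c" and c_less: "c < pi\<^sup>2"
  shows "(let s = sqrt c; Cp = arctan ((cos s - exp D) / sin s)
          in \<bar>ln ((tan (Cp + s) + 1 / cos (Cp + s)) / (tan Cp + 1 / cos Cp))\<bar>)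
         = sqrt (s0\<^sup>2 + c) * J"
proof -
  define k where "k = sqrt c"
  define \<theta> where "\<theta> = arctan (s0 / k)"
  have cos_\<theta>: "0 < cos \<theta>"
    using cos_\<theta>_pos[OF c_pos c_less] by (simp add: \<theta>_def k_def)
  have "0 < cos (- \<theta> + k)"
    using cos_shift_pos[OF c_pos c_less, of 1, folded k_def, folded \<theta>_def] by (simp add: algebra_simps)
  then have "ln ((tan (- \<theta> + k) + 1 / cos (- \<theta> + k)) / (tan (- \<theta>) + 1 / cos (- \<theta>)))
      = inv_gd (- \<theta> + k) - inv_gd (- \<theta>)"
    unfolding inv_gd_def using cos_\<theta> by (intro ln_divide_pos tan_plus_sec_pos) simp_all
  also have "\<dots> = sqrt (s0\<^sup>2 + c) * J"
    using inv_gd_diff_eq[OF c_pos c_less] sqrt_s0_sq_plus_c_eq[OF c_pos c_less] by (simp add: k_def \<theta>_def)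
  finally show ?thesis
    using Cp_eq[OF c_pos c_less] J_pos c_pos zero_le_power2[of s0]
    by (simp add: Let_def k_def[symmetric] \<theta>_def[symmetric])
qed

lemma E_eq_exp:
  assumes "c < 0" and t: "t \<in> {0..1}"
  defines "k \<equiv> sqrt (- c)"
  shows "E t = (s0 + k) / (2 * k) * exp (k * t) + (k - s0) / (2 * k) / exp (k * t)"
proof -
  have k: "0 < k" "k\<^sup>2 = - c" using assms(1) by (auto simp: k_def)
  have deriv_zero:
    "((\<lambda>t. (q t + k * E t) * exp (- (k * t))) has_real_derivative 0) (at x within {0..1})"
    "((\<lambda>t. (q t - k * E t) * exp (k * t)) has_real_derivative 0) (at x within {0..1})"
    if x: "x \<in> {0..1}" for x
    using E_deriv[OF x] q_deriv[OF x]
    by (auto intro!: derivative_eq_intros simp: k(2)[symmetric] algebra_simps power2_eq_square)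
  have "(q t + k * E t) * exp (- (k * t)) = s0 + k"
    using DERIV_zero_imp_eq_at_0[OF deriv_zero(1) t] E_0 q_0 by simp
  then have plus: "q t + k * E t = (s0 + k) * exp (k * t)"
    by (simp add: exp_minus field_simps)
  have minus: "(q t - k * E t) * exp (k * t) = s0 - k"
    using DERIV_zero_imp_eq_at_0[OF deriv_zero(2) t] E_0 q_0 by simp
  have "2 * k * E t * exp (k * t) = (q t + k * E t) * exp (k * t) - (q t - k * E t) * exp (k * t)"
    by (simp add: algebra_simps)
  also have "\<dots> = (s0 + k) * exp (k * t) * exp (k * t) - (s0 - k)"
    using plus minus by simp
  finally have twice: "2 * k * E t * exp (k * t) = (s0 + k) * exp (k * t) * exp (k * t) - (s0 - k)" .
  have "E t = (2 * k * E t * exp (k * t)) / (2 * k * exp (k * t))"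
    using k(1) by simp
  also have "\<dots> = ((s0 + k) * exp (k * t) * exp (k * t) - (s0 - k)) / (2 * k * exp (k * t))"
    unfolding twice ..
  also have "\<dots> = (s0 + k) / (2 * k) * exp (k * t) + (k - s0) / (2 * k) / exp (k * t)"
    using k(1) by (simp add: field_simps)
  finally show ?thesis .
qed

text \<open>
  This is where the hypothesis lam \<ge> -D^2/d, i.e. D^2 + c \<ge> 0, enters: it makes s0^2 + c
  nonnegative, and zero exactly at the boundary value, where the paper sets m = 0.
\<close>

lemma sgn_D_sq_plus_c:
  assumes "c < 0"
  shows "sgn (D\<^sup>2 + c) = sgn (s0\<^sup>2 + c)"
proof -
  define k where "k = sqrt (- c)"
  have k: "0 < k" "c = - k\<^sup>2" using assms by (auto simp: k_def)
  define X where "X = exp k"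
  have X: "1 < X" using k(1) by (simp add: X_def)
  have exp_D: "exp D = (s0 + k) / (2 * k) * X + (k - s0) / (2 * k) / X"
    using E_eq_exp[OF assms, of 1] E_1 by (simp add: k_def X_def)
  have "(exp D - exp k) * (exp D - exp (- k)) = (s0\<^sup>2 + c) * ((X - 1 / X) / (2 * k))\<^sup>2"
    unfolding exp_D exp_minus X_def[symmetric] k(2) using k(1) X
    by (simp add: field_simps power2_eq_square)
  moreover have "sgn ((exp D - exp k) * (exp D - exp (- k))) = sgn (D\<^sup>2 + c)"
    unfolding sgn_mult sgn_exp_diff k(2)
    by (simp add: sgn_mult[symmetric] algebra_simps power2_eq_square)
  moreover have "0 < X - 1 / X"
    using X less_1_mult[OF X X] by (simp add: field_simps)
  ultimately show ?thesis
    using k(1) by (simp add: sgn_mult)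
qed

context
  fixes k A r :: real
  assumes c_neg: "c < 0" and P_pos: "0 < s0\<^sup>2 + c"
  defines k_def: "k \<equiv> sqrt (- c)" and A_def: "A \<equiv> (s0 + k) / (2 * k)"
    and r_def: "r \<equiv> sqrt ((s0 - k) / (s0 + k))"
begin

lemma neg_branch_params:
  shows k_pos: "0 < k" and c_eq: "c = - k\<^sup>2" and s0_plus_k: "s0 + k \<noteq> 0" and A_ne_0: "A \<noteq> 0"
    and r_pos: "0 < r" and r_sq: "r\<^sup>2 = (s0 - k) / (s0 + k)" and r_ne_1: "r \<noteq> 1"
proof -
  show k: "0 < k" "c = - k\<^sup>2" using c_neg by (auto simp: k_def)
  have P: "0 < (s0 - k) * (s0 + k)"
    using P_pos unfolding k(2) by (simp add: algebra_simps power2_eq_square)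
  then show s0_k: "s0 + k \<noteq> 0" by auto
  then show "A \<noteq> 0" using k(1) by (simp add: A_def)
  have ratio: "0 < (s0 - k) / (s0 + k)"
    using P by (simp add: zero_less_divide_iff zero_less_mult_iff)
  then show "0 < r" "r\<^sup>2 = (s0 - k) / (s0 + k)" by (simp_all add: r_def)
  have "(s0 - k) / (s0 + k) \<noteq> 1" using s0_k k(1) by simp
  then show "r \<noteq> 1" using ratio by (auto simp: r_def)
qed

lemma one_minus_A_eq: "1 - A = - A * r\<^sup>2"
proof -
  have cancel: "a / b * (c / a) = c / b" if "a \<noteq> 0" for a b c :: real
    using that by (cases "b = 0") (simp_all add: field_simps)
  have "1 - A = (k - s0) / (2 * k)"
    using k_pos by (simp add: A_def field_simps)
  also have "\<dots> = - ((s0 - k) / (2 * k))"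
    using k_pos by (simp add: field_simps)
  also have "(s0 - k) / (2 * k) = A * r\<^sup>2"
    unfolding A_def r_sq using cancel[OF s0_plus_k] by simp
  finally show ?thesis by simp
qed

lemma E_eq_factored:
  "t \<in> {0..1} \<Longrightarrow> E t = A * ((exp (k * t) + r) * (exp (k * t) - r)) / exp (k * t)"
proof -
  assume t: "t \<in> {0..1}"
  have "(k - s0) / (2 * k) = - A * r\<^sup>2"
    using one_minus_A_eq k_pos by (simp add: A_def field_simps)
  then show ?thesis
    using E_eq_exp[OF c_neg t] unfolding k_def[symmetric] A_def[symmetric]
    by (simp add: field_simps power2_eq_square)
qed

lemma exp_minus_r_sign: "t \<in> {0..1} \<Longrightarrow> 0 < (exp (k * t) - r) * (1 - r)"
proof -
  assume t: "t \<in> {0..1}"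
  have "0 < A * ((exp (k * t) + r) * (exp (k * t) - r))" "0 < A * ((1 + r) * (1 - r))"
    using E_pos[OF t] E_eq_factored[OF t] E_pos[of 0] E_eq_factored[of 0]
    by (simp_all add: zero_less_divide_iff)
  then have "0 < (A * ((exp (k * t) + r) * (exp (k * t) - r))) * (A * ((1 + r) * (1 - r)))"
    by simp
  then have "0 < A\<^sup>2 * ((exp (k * t) + r) * (1 + r)) * ((exp (k * t) - r) * (1 - r))"
    by (simp add: algebra_simps power2_eq_square)
  moreover have "0 < A\<^sup>2 * ((exp (k * t) + r) * (1 + r))"
    using A_ne_0 r_pos by (simp add: add_pos_pos)
  ultimately show ?thesis by (simp add: zero_less_mult_iff)
qed

lemma DERIV_primitive_neg_branch:
  assumes t: "t \<in> {0..1}"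
  shows "((\<lambda>t. ln ((exp (k * t) + r) / (1 + r)) - ln ((exp (k * t) - r) / (1 - r)))
    has_real_derivative - (2 * r * k * A) / E t) (at t within {0..1})"
proof -
  define y where "y = exp (k * t)"
  have y: "0 < y" by (simp add: y_def)
  have sign: "0 < (y - r) * (1 - r)"
    using exp_minus_r_sign[OF t] by (simp add: y_def)
  then have nz: "y - r \<noteq> 0" "y + r \<noteq> 0" "y \<noteq> 0"
    using y r_pos by auto
  have "0 < (y + r) / (1 + r)" "0 < (y - r) / (1 - r)"
    using sign y r_pos by (simp_all add: zero_less_divide_iff zero_less_mult_iff)
  then have deriv: "((\<lambda>t. ln ((exp (k * t) + r) / (1 + r)) - ln ((exp (k * t) - r) / (1 - r)))
      has_real_derivative k * y / (y + r) - k * y / (y - r)) (at t within {0..1})"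
    using DERIV_ln_exp_affine[of k t r "1 + r"] DERIV_ln_exp_affine[of k t "- r" "1 - r"]
    unfolding y_def by (intro DERIV_diff) simp_all
  have cancel: "k * y / a * (A * (a * b) / y) = k * A * b" "k * y / a * (A * (b * a) / y) = k * A * b"
    if "a \<noteq> 0" "y \<noteq> 0" for a b y :: real
    using that by (simp_all add: field_simps)
  have "k * y / (y + r) * E t = k * A * (y - r)"
    unfolding E_eq_factored[OF t] y_def[symmetric] using nz by (intro cancel(1))
  moreover have "k * y / (y - r) * E t = k * A * (y + r)"
    unfolding E_eq_factored[OF t] y_def[symmetric] using nz by (intro cancel(2))
  ultimately have prod: "(k * y / (y + r) - k * y / (y - r)) * E t = - (2 * r * k * A)"
    by (simp add: left_diff_distrib algebra_simps)
  have "k * y / (y + r) - k * y / (y - r) = (k * y / (y + r) - k * y / (y - r)) * E t / E t"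
    using E_pos[OF t] by simp
  also have "\<dots> = - (2 * r * k * A) / E t"
    unfolding prod ..
  finally show ?thesis using deriv by simp
qed

lemma ln_neg_branch_eq:
  "ln (((exp k / r + 1) * (- 1 / r + 1)) / ((1 - exp k / r) * (1 + 1 / r))) = - (2 * r * k * A) * J"
proof -
  define H where "H = (\<lambda>t. ln ((exp (k * t) + r) / (1 + r)) - ln ((exp (k * t) - r) / (1 - r)))"
  have "integral {0..1} (\<lambda>t. - (2 * r * k * A) / E t) = H 1 - H 0"
    unfolding H_def by (rule integral_unit_interval_eq_diff[OF DERIV_primitive_neg_branch])
  then have "- (2 * r * k * A) * J = H 1 - H 0"
    using integral_const_div_E[of "- (2 * r * k * A)"] by simp
  moreover have "H 0 = 0"
    using r_pos r_ne_1 by (simp add: H_def)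
  moreover have "H 1 = ln (((exp k + r) / (1 + r)) / ((exp k - r) / (1 - r)))"
  proof -
    have "0 < exp k + r"
      using exp_gt_zero[of k] r_pos by linarith
    then have "0 < (exp k + r) / (1 + r)" "0 < (exp k - r) / (1 - r)"
      using exp_minus_r_sign[of 1] r_pos by (simp_all add: zero_less_divide_iff zero_less_mult_iff)
    then show ?thesis
      unfolding H_def mult_1_right by (rule ln_divide_pos[symmetric])
  qed
  moreover have "((exp k / r + 1) * (- 1 / r + 1)) / ((1 - exp k / r) * (1 + 1 / r))
      = ((exp k + r) / (1 + r)) / ((exp k - r) / (1 - r))"
  proof -
    have "(exp k / r + 1) * (- 1 / r + 1) = ((exp k + r) * (1 - r)) / (- (r * r))"
      "(1 - exp k / r) * (1 + 1 / r) = ((exp k - r) * (1 + r)) / (- (r * r))"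
      using r_pos by (simp_all add: field_simps)
    then show ?thesis
      using r_pos by (simp add: divide_divide_times_eq ac_simps)
  qed
  ultimately show ?thesis by simp
qed

lemma abs_neg_branch_factor: "\<bar>2 * r * k * A\<bar> = sqrt (s0\<^sup>2 + c)"
proof -
  have "2 * r * k * A = r * (s0 + k)"
    using k_pos by (simp add: A_def)
  then have "(2 * r * k * A)\<^sup>2 = r\<^sup>2 * (s0 + k)\<^sup>2"
    by (simp only: power_mult_distrib)
  also have "\<dots> = (s0 - k) * (s0 + k)"
    unfolding r_sq using s0_plus_k by (simp add: power2_eq_square)
  also have "\<dots> = s0\<^sup>2 + c"
    unfolding c_eq by (simp add: algebra_simps power2_eq_square)
  finally show ?thesis by (metis real_sqrt_abs)
qed

lemma Cm_eq: "(exp (2 * k) - exp (D + k)) / (exp (D + k) - 1) = - r\<^sup>2"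
proof -
  define B where "B = 1 - A"
  have "exp D = A * exp k + B / exp k"
    using E_eq_exp[OF c_neg, of 1] E_1 k_pos
    by (simp add: k_def[symmetric] A_def B_def field_simps)
  then have exp_Dk: "exp (D + k) = A * (exp k)\<^sup>2 + B"
    by (simp add: exp_add field_simps power2_eq_square)
  have "exp (2 * k) - exp (D + k) = B * ((exp k)\<^sup>2 - 1)"
    unfolding exp_Dk exp_double B_def by (simp add: algebra_simps)
  moreover have "exp (D + k) - 1 = A * ((exp k)\<^sup>2 - 1)"
    unfolding exp_Dk B_def by (simp add: algebra_simps)
  moreover have "(exp k)\<^sup>2 - 1 \<noteq> 0"
    using less_1_mult[of "exp k" "exp k"] k_pos by (simp add: power2_eq_square)
  moreover have "B / A = - r\<^sup>2"
    unfolding B_def one_minus_A_eq using A_ne_0 by simp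
  ultimately show ?thesis
    using A_ne_0 by simp
qed

end

lemma mfun_neg_branch:
  assumes c_neg: "c < 0" and c_gt: "- (D\<^sup>2) < c"
  shows "(let s = sqrt (- c); Cm = (exp (2 * s) - exp (D + s)) / (exp (D + s) - 1); r = sqrt (- Cm)
          in \<bar>ln (((exp s / r + 1) * (- 1 / r + 1)) / ((1 - exp s / r) * (1 + 1 / r)))\<bar>)
         = sqrt (s0\<^sup>2 + c) * J"
proof -
  have P: "0 < s0\<^sup>2 + c"
    using sgn_D_sq_plus_c[OF c_neg] c_gt by (simp add: sgn_if split: if_splits)
  define k where "k = sqrt (- c)"
  define A where "A = (s0 + k) / (2 * k)"
  define r where "r = sqrt ((s0 - k) / (s0 + k))"
  have "sqrt (- ((exp (2 * k) - exp (D + k)) / (exp (D + k) - 1))) = r"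
    using Cm_eq[OF c_neg P] r_pos[OF c_neg P] by (simp add: k_def r_def)
  moreover have "\<bar>ln (((exp k / r + 1) * (- 1 / r + 1)) / ((1 - exp k / r) * (1 + 1 / r)))\<bar>
      = sqrt (s0\<^sup>2 + c) * J"
    using ln_neg_branch_eq[OF c_neg P] abs_neg_branch_factor[OF c_neg P] J_pos
    by (simp add: k_def A_def r_def abs_mult)
  ultimately show ?thesis
    by (simp add: Let_def k_def)
qed

lemma mfun_eq_sqrt_mul_J:
  assumes d: "0 < d" and c: "c = real d * lam"
    and lam_ge: "- (D\<^sup>2) / real d \<le> lam" and lam_less: "lam < pi\<^sup>2 / real d"
  shows "0 \<le> s0\<^sup>2 + c \<and> mfun d D lam = sqrt (s0\<^sup>2 + c) * J"
proof (cases lam "0::real" rule: linorder_cases)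
  case less
  have c_neg: "c < 0" using less d by (simp add: c mult_pos_neg)
  have c_ge: "- (D\<^sup>2) \<le> c" using lam_ge d by (simp add: c field_simps)
  show ?thesis
  proof (cases "c = - (D\<^sup>2)")
    case True
    then have "s0\<^sup>2 + c = 0" using sgn_D_sq_plus_c[OF c_neg] by (simp add: sgn_0_0)
    moreover have "lam = - (D\<^sup>2) / real d" using True d by (simp add: c field_simps)
    ultimately show ?thesis using less by (simp add: mfun_def)
  next
    case False
    then have "- (D\<^sup>2) < c" using c_ge by simp
    moreover have "lam \<noteq> - (D\<^sup>2) / real d" using False d by (auto simp: c field_simps)
    moreover have "0 < s0\<^sup>2 + c"
      using sgn_D_sq_plus_c[OF c_neg] \<open>- (D\<^sup>2) < c\<close> by (simp add: sgn_if split: if_splits)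
    ultimately show ?thesis
      using mfun_neg_branch[OF c_neg] less by (simp add: mfun_def Let_def c)
  qed
next
  case equal
  then show ?thesis using mfun_zero_branch c by (simp add: mfun_def)
next
  case greater
  have "0 < c" "c < pi\<^sup>2" using greater lam_less d by (simp_all add: c field_simps)
  moreover have "0 \<le> s0\<^sup>2 + c" using \<open>0 < c\<close> zero_le_power2[of s0] by linarith
  ultimately show ?thesis
    using mfun_pos_branch greater by (simp add: mfun_def Let_def c)
qed

end

lemma riccati_linearization_exp_integral:
  assumes S_deriv: "\<And>t. t \<in> {0..1} \<Longrightarrow> (S has_real_derivative - (S t)\<^sup>2 - c) (at t within {0..1})"
  shows "riccati_linearization c (S 0) (integral {0..1} S)
    (\<lambda>t. exp (integral {0..t} S)) (\<lambda>t. S t * exp (integral {0..t} S))"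
proof
  have S_cont: "continuous_on {0..1} S"
    by (rule DERIV_continuous_on) (rule S_deriv)
  show E_deriv: "((\<lambda>t. exp (integral {0..t} S)) has_real_derivative S t * exp (integral {0..t} S))
      (at t within {0..1})" if t: "t \<in> {0..1}" for t
    using DERIV_chain2[OF DERIV_exp integral_has_real_derivative[OF S_cont t]] by (simp add: mult.commute)
  show "((\<lambda>t. S t * exp (integral {0..t} S)) has_real_derivative - c * exp (integral {0..t} S))
      (at t within {0..1})" if t: "t \<in> {0..1}" for t
    using DERIV_mult[OF S_deriv[OF t] E_deriv[OF t]] by (simp add: algebra_simps power2_eq_square)
qed simp_all

lemma DERIV_sum_riccati:
  assumes "\<And>i. i < d \<Longrightarrow> (L i has_real_derivative - (\<Sum>k<d. L k t) * L i t - lam) (at t within T)"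
  shows "((\<lambda>t. \<Sum>k<d. L k t) has_real_derivative - (\<Sum>k<d. L k t)\<^sup>2 - real d * lam) (at t within T)"
proof -
  have "((\<lambda>t. \<Sum>k<d. L k t) has_real_derivative (\<Sum>i<d. - (\<Sum>k<d. L k t) * L i t - lam)) (at t within T)"
    using assms by (intro DERIV_sum) simp
  moreover have "(\<Sum>i<d. - (\<Sum>k<d. L k t) * L i t - lam) = - (\<Sum>k<d. L k t)\<^sup>2 - real d * lam"
    by (simp add: sum_subtractf sum_negf sum_distrib_left[symmetric] power2_eq_square)
  ultimately show ?thesis by simp
qed

lemma centered_sum_squares_iff:
  fixes u :: "nat \<Rightarrow> real"
  assumes d: "2 \<le> d" and u_sum: "(\<Sum>i<d. u i) = 0" and J: "0 < J" and P: "0 \<le> s\<^sup>2 + real d * lam"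
  shows "(real d - 1) * lam = (\<Sum>i<d. (u i + s / real d)\<^sup>2) - s\<^sup>2
    \<longleftrightarrow> sqrt (s\<^sup>2 + real d * lam) * J = sqrt (real d / (real d - 1) * (\<Sum>i<d. (u i * J)\<^sup>2))"
proof -
  define U where "U = (\<Sum>i<d. (u i)\<^sup>2)"
  have d1: "1 < real d" using d by simp
  have "(\<Sum>i<d. (u i + s / real d)\<^sup>2) = U + 2 * (s / real d) * (\<Sum>i<d. u i) + real d * (s / real d)\<^sup>2"
    by (simp add: U_def power2_sum sum.distrib sum_distrib_left sum_divide_distrib ac_simps)
  also have "\<dots> = U + s\<^sup>2 / real d"
    using u_sum d1 by (simp add: power2_eq_square)
  finally have sum_sq: "(\<Sum>i<d. (u i + s / real d)\<^sup>2) = U + s\<^sup>2 / real d" .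
  have lhs: "(real d - 1) * lam = (\<Sum>i<d. (u i + s / real d)\<^sup>2) - s\<^sup>2
      \<longleftrightarrow> (s\<^sup>2 + real d * lam) = real d / (real d - 1) * U"
    unfolding sum_sq using d1 by (simp add: field_simps)
  have U: "0 \<le> U" by (simp add: U_def sum_nonneg)
  have sum_J: "real d / (real d - 1) * (\<Sum>i<d. (u i * J)\<^sup>2) = (real d / (real d - 1) * U) * J\<^sup>2"
    by (simp add: U_def power_mult_distrib sum_distrib_left sum_distrib_right ac_simps)
  have "sqrt (real d / (real d - 1) * (\<Sum>i<d. (u i * J)\<^sup>2)) = sqrt (real d / (real d - 1) * U) * J"
    unfolding sum_J real_sqrt_mult real_sqrt_abs using J by simp
  then have rhs: "sqrt (s\<^sup>2 + real d * lam) * J = sqrt (real d / (real d - 1) * (\<Sum>i<d. (u i * J)\<^sup>2))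
      \<longleftrightarrow> (s\<^sup>2 + real d * lam) = real d / (real d - 1) * U"
    using J P U d1 by simp
  show ?thesis unfolding lhs rhs ..
qed

lemma deviation_times_E_const:
  fixes d :: real
  assumes d: "d \<noteq> 0" and t: "t \<in> {0..1}"
    and L_deriv: "\<And>t. t \<in> {0..1} \<Longrightarrow> (L has_real_derivative - S t * L t - lam) (at t within {0..1})"
    and S_deriv: "\<And>t. t \<in> {0..1} \<Longrightarrow> (S has_real_derivative - (S t)\<^sup>2 - d * lam) (at t within {0..1})"
    and E_deriv: "\<And>t. t \<in> {0..1} \<Longrightarrow> (E has_real_derivative S t * E t) (at t within {0..1})"
  shows "(L t - S t / d) * E t = (L 0 - S 0 / d) * E 0"
proof (rule DERIV_zero_imp_eq_at_0[OF _ t])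
  fix x assume x: "x \<in> {0..1::real}"
  show "((\<lambda>t. (L t - S t / d) * E t) has_real_derivative 0) (at x within {0..1})"
    using L_deriv[OF x] S_deriv[OF x] E_deriv[OF x] d
    by (auto intro!: derivative_eq_intros simp: field_simps power2_eq_square)
qed

locale riccati_system =
  fixes d :: nat and lam :: real and L :: "nat \<Rightarrow> real \<Rightarrow> real" and Dc :: "nat \<Rightarrow> real"
  assumes d_pos: "0 < d"
    and L_deriv_sum: "\<And>i t. i < d \<Longrightarrow> t \<in> {0..1} \<Longrightarrow>
      (L i has_real_derivative - (\<Sum>k<d. L k t) * L i t - lam) (at t within {0..1})"
    and integral_L: "\<And>i. i < d \<Longrightarrow> integral {0..1} (L i) = Dc i"
begin

definition S :: "real \<Rightarrow> real" where
  "S t = (\<Sum>k<d. L k t)"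

lemma L_deriv:
  "i < d \<Longrightarrow> t \<in> {0..1} \<Longrightarrow> (L i has_real_derivative - S t * L i t - lam) (at t within {0..1})"
  using L_deriv_sum by (simp add: S_def)

lemma S_deriv:
  "t \<in> {0..1} \<Longrightarrow> (S has_real_derivative - (S t)\<^sup>2 - real d * lam) (at t within {0..1})"
  unfolding S_def[abs_def] by (rule DERIV_sum_riccati) (rule L_deriv_sum)

lemma S_continuous: "continuous_on {0..1} S"
  using S_deriv by (rule DERIV_continuous_on)

lemma integral_S: "integral {0..1} S = (\<Sum>i<d. Dc i)"
proof -
  have "L i integrable_on {0..1}" if "i < d" for i
    using L_deriv[OF that] by (intro integrable_continuous_real DERIV_continuous_on)
  then show ?thesis
    unfolding S_def[abs_def] using integral_L by (subst integral_sum) auto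
qed

sublocale riccati_linearization "real d * lam" "S 0" "\<Sum>i<d. Dc i"
  "\<lambda>t. exp (integral {0..t} S)" "\<lambda>t. S t * exp (integral {0..t} S)"
  using riccati_linearization_exp_integral[OF S_deriv] by (simp add: integral_S)

lemma deviation_eq: "i < d \<Longrightarrow> Dc i - (\<Sum>i<d. Dc i) / real d = (L i 0 - S 0 / real d) * J"
proof -
  assume i: "i < d"
  have L_eq: "L i t = (L i 0 - S 0 / real d) / exp (integral {0..t} S) + S t / real d"
    if t: "t \<in> {0..1}" for t
    using deviation_times_E_const[of "real d" t "L i" S lam, OF _ t L_deriv[OF i] S_deriv E_deriv] d_pos
    by (simp add: field_simps)
  have "integral {0..1} (L i) = (L i 0 - S 0 / real d) * J + integral {0..1} (\<lambda>t. S t / real d)"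
    by (intro integral_const_div_E_plus L_eq integrable_continuous_real continuous_intros S_continuous)
      (use d_pos in simp_all)
  then show ?thesis
    using integral_L[OF i] integral_S by simp
qed

end

theorem lemma3p4:
  fixes d :: nat and Dc :: "nat \<Rightarrow> real" and lam :: real
    and L :: "nat \<Rightarrow> real \<Rightarrow> real"
  assumes "d \<ge> 2"
  defines "D \<equiv> (\<Sum>i<d. Dc i)"
  assumes "- (D^2) / real d \<le> lam" and "lam < pi^2 / real d"
    and "\<forall>i<d. \<forall>t\<in>{0..1}.
           (L i has_real_derivative (- (\<Sum>k<d. L k t) * L i t - lam)) (at t within {0..1})"
    and "\<forall>i<d. integral {0..1} (L i) = Dc i"
  shows "(real d - 1) * lam = (\<Sum>i<d. (L i 0)^2) - (\<Sum>i<d. L i 0)^2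
         \<longleftrightarrow> mfun d D lam = sqrt (real d / (real d - 1) * (\<Sum>i<d. (Dc i - D / real d)^2))"
proof -
  interpret riccati_system d lam L Dc
    using assms(1,5,6) by unfold_locales auto
  define u where "u i = L i 0 - S 0 / real d" for i
  have m: "0 \<le> (S 0)\<^sup>2 + real d * lam \<and> mfun d D lam = sqrt ((S 0)\<^sup>2 + real d * lam) * J"
    unfolding D_def using assms(1,3,4) by (intro mfun_eq_sqrt_mul_J) (simp_all add: D_def)
  have "(\<Sum>i<d. u i) = 0"
    using assms(1) by (simp add: u_def sum_subtractf S_def)
  moreover have "(\<Sum>i<d. (L i 0)\<^sup>2) = (\<Sum>i<d. (u i + S 0 / real d)\<^sup>2)" "(\<Sum>i<d. L i 0) = S 0"
    by (simp_all add: u_def S_def)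
  moreover have "(\<Sum>i<d. (Dc i - D / real d)\<^sup>2) = (\<Sum>i<d. (u i * J)\<^sup>2)"
    unfolding D_def u_def using deviation_eq by simp
  ultimately show ?thesis
    using centered_sum_squares_iff[OF assms(1), of u J "S 0" lam] m J_pos by simp
qed

end
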